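(* Let $p\in(0,1)$ and let $(\lambda_n)_{n\ge1}$ be a sequence with $\lambda_1=1$ and $0<\lambda_n\le\lambda_{n-1}$ for all $n>1$. Let $r_1,r_2,\dots$ be $\{0,1\}$-valued random variables with $\Pr(r_1=1)=p$ and, for every $n\ge2$, $\Pr(r_n=1\mid r_1,\dots,r_{n-1})=\lambda_n p+(1-\lambda_n)\bar p_{n-1}$, where $\bar p_m=\frac1m\sum_{i=1}^m r_i$. Define $\hat r_1=r_1$ and $\hat r_i=\frac{r_i-(1-\lambda_i)\bar p_{i-1}}{\lambda_i}$ for $i\ge2$. Then for all $i>j\ge1$, \[\mathbb{E}[\hat r_i\mid\hat r_j]=\mathbb{E}[\hat r_i\mid\bar p_j]=p.\] *)

theory Defs
  imports "HOL-Probability.Probability"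
begin

definition pbar :: "(nat \<Rightarrow> 'a \<Rightarrow> real) \<Rightarrow> nat \<Rightarrow> 'a \<Rightarrow> real" where
  "pbar r m x = (\<Sum>i = 1..m. r i x) / real m"

definition rhat :: "(nat \<Rightarrow> real) \<Rightarrow> (nat \<Rightarrow> 'a \<Rightarrow> real) \<Rightarrow> nat \<Rightarrow> 'a \<Rightarrow> real" where
  "rhat lam r i x = (if i = 1 then r 1 x
                     else (r i x - (1 - lam i) * pbar r (i - 1) x) / lam i)"

definition gen_by :: "'a measure \<Rightarrow> (nat \<Rightarrow> 'a \<Rightarrow> real) \<Rightarrow> nat set \<Rightarrow> 'a measure" where
  "gen_by M r I = vimage_algebra (space M) (\<lambda>x. \<lambda>i\<in>I. r i x) (PiM I (\<lambda>_. borel))"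

definition gen1 :: "'a measure \<Rightarrow> ('a \<Rightarrow> real) \<Rightarrow> 'a measure" where
  "gen1 M X = vimage_algebra (space M) X borel"

end

theory Submission
  imports Defs
begin

text \<open>Let \<open>F\<close> be the \<open>\<sigma>\<close>-algebra generated by \<open>r\<^sub>1, \<dots>, r\<^sub>i\<^sub>-\<^sub>1\<close>. Since the running mean
  \<open>pbar\<^sub>i\<^sub>-\<^sub>1\<close> is \<open>F\<close>-measurable, the prescribed conditional law of \<open>r\<^sub>i\<close> makes the debiased
  variable satisfy \<open>E[rhat\<^sub>i | F] = p\<close>. For \<open>j < i\<close> both \<open>rhat\<^sub>j\<close> and \<open>pbar\<^sub>j\<close> are
  \<open>F\<close>-measurable, so the \<open>\<sigma>\<close>-algebras they generate lie inside \<open>F\<close>, and the tower property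
  passes the constant \<open>p\<close> down to them.\<close>

lemma subalgebra_vimage_algebra:
  assumes "f \<in> M \<rightarrow>\<^sub>M N"
  shows "subalgebra M (vimage_algebra (space M) f N)"
  using sets_image_in_sets[OF refl assms] by (simp add: subalgebra_def)

lemma subalgebra_gen_by:
  assumes "\<And>n. n \<in> I \<Longrightarrow> r n \<in> borel_measurable M"
  shows "subalgebra M (gen_by M r I)"
  unfolding gen_by_def using assms by (intro subalgebra_vimage_algebra measurable_restrict)

lemma subalgebra_gen1:
  assumes "X \<in> borel_measurable F" and "space F = space M"
  shows "subalgebra F (gen1 M X)"
  using subalgebra_vimage_algebra[OF assms(1)] assms(2) by (simp add: gen1_def)

lemma borel_measurable_gen_by_component:
  assumes "k \<in> I"
  shows "r k \<in> borel_measurable (gen_by M r I)"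
proof -
  have "(\<lambda>x. \<lambda>i\<in>I. r i x) \<in> gen_by M r I \<rightarrow>\<^sub>M PiM I (\<lambda>_. borel)"
    unfolding gen_by_def by (rule measurable_vimage_algebra1) (auto simp: space_PiM)
  from measurable_compose[OF this measurable_component_singleton[OF assms]] assms
  show ?thesis by simp
qed

lemma borel_measurable_pbar:
  assumes "\<And>k. 1 \<le> k \<Longrightarrow> k \<le> m \<Longrightarrow> r k \<in> borel_measurable N"
  shows "pbar r m \<in> borel_measurable N"
  unfolding pbar_def[abs_def] using assms by (intro borel_measurable_divide borel_measurable_sum) auto

lemma borel_measurable_rhat:
  assumes "\<And>k. 1 \<le> k \<Longrightarrow> k \<le> i \<Longrightarrow> r k \<in> borel_measurable N" and "1 \<le> i"
  shows "rhat lam r i \<in> borel_measurable N"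
proof -
  have "pbar r (i - 1) \<in> borel_measurable N"
    using assms(1) by (intro borel_measurable_pbar) auto
  then show ?thesis
    unfolding rhat_def[abs_def] using assms by measurable
qed

lemma integrable_pbar:
  assumes "\<And>k. 1 \<le> k \<Longrightarrow> k \<le> m \<Longrightarrow> integrable M (r k)"
  shows "integrable M (pbar r m)"
  unfolding pbar_def[abs_def] using assms by (intro integrable_divide integrable_sum) auto

lemma integrable_rhat:
  assumes "\<And>k. 1 \<le> k \<Longrightarrow> k \<le> i \<Longrightarrow> integrable M (r k)" and "1 \<le> i"
  shows "integrable M (rhat lam r i)"
proof (cases "i = 1")
  case True
  then show ?thesis
    using assms by (simp add: rhat_def[abs_def])
next
  case False
  have "integrable M (pbar r (i - 1))"
    using assms(1) by (intro integrable_pbar) auto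
  then show ?thesis
    using False assms by (simp add: rhat_def[abs_def])
qed

lemma (in finite_measure) integrable_zero_one_valued:
  fixes X :: "'a \<Rightarrow> real"
  assumes "X \<in> borel_measurable M" and "\<And>x. x \<in> space M \<Longrightarrow> X x \<in> {0, 1}"
  shows "integrable M X"
proof (rule integrable_const_bound[where B = 1])
  show "AE x in M. norm (X x) \<le> 1"
    using assms(2) by (intro AE_I2) force
qed (fact assms(1))

lemma (in prob_space) real_cond_exp_nested_subalg_const:
  assumes "subalgebra M F" and "subalgebra F G" and "integrable M f"
    and "AE x in M. real_cond_exp M F f x = c"
  shows "AE x in M. real_cond_exp M G f x = c"
proof -
  interpret G: finite_measure_subalgebra M G
    using assms(1,2) by unfold_locales (auto simp: subalgebra_def)
  have "AE x in M. real_cond_exp M G (real_cond_exp M F f) x = real_cond_exp M G f x"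
    using assms(1-3) by (rule G.real_cond_exp_nested_subalg)
  moreover have "AE x in M. real_cond_exp M G (real_cond_exp M F f) x = real_cond_exp M G (\<lambda>_. c) x"
    using assms(4) by (rule G.real_cond_exp_cong) auto
  moreover have "AE x in M. real_cond_exp M G (\<lambda>_. c) x = c"
    by (rule G.real_cond_exp_F_meas) auto
  ultimately show ?thesis by eventually_elim simp
qed

lemma (in sigma_finite_subalgebra) real_cond_exp_debiased:
  assumes "integrable M X" and "integrable M Y" and "Y \<in> borel_measurable F" and "l \<noteq> 0"
    and "AE x in M. real_cond_exp M F X x = l * c + (1 - l) * Y x"
  shows "AE x in M. real_cond_exp M F (\<lambda>x. (X x - (1 - l) * Y x) / l) x = c"
proof -
  have "AE x in M. real_cond_exp M F (\<lambda>x. (X x - (1 - l) * Y x) / l) x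
      = real_cond_exp M F (\<lambda>x. X x - (1 - l) * Y x) x / l"
    using assms(1,2) by (intro real_cond_exp_cdiv) auto
  moreover have "AE x in M. real_cond_exp M F (\<lambda>x. X x - (1 - l) * Y x) x
      = real_cond_exp M F X x - real_cond_exp M F (\<lambda>x. (1 - l) * Y x) x"
    using assms(1,2) by (intro real_cond_exp_diff) auto
  moreover have "AE x in M. real_cond_exp M F (\<lambda>x. (1 - l) * Y x) x = (1 - l) * Y x"
    using assms(2,3) by (intro real_cond_exp_F_meas) auto
  ultimately show ?thesis
    using assms(5) by eventually_elim (use assms(4) in simp)
qed

lemma (in prob_space) real_cond_exp_rhat_past:
  assumes "2 \<le> i" and "lam i \<noteq> 0"
    and "\<And>k. 1 \<le> k \<Longrightarrow> k \<le> i \<Longrightarrow> integrable M (r k)"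
    and "AE x in M. real_cond_exp M (gen_by M r {1..i - 1}) (r i) x
                    = lam i * c + (1 - lam i) * pbar r (i - 1) x"
  shows "AE x in M. real_cond_exp M (gen_by M r {1..i - 1}) (rhat lam r i) x = c"
proof -
  define F where "F = gen_by M r {1..i - 1}"
  have r_M: "r k \<in> borel_measurable M" if "1 \<le> k" "k \<le> i" for k
    using assms(3)[OF that] by (rule borel_measurable_integrable)
  interpret F: finite_measure_subalgebra M F
    unfolding F_def using r_M by unfold_locales (intro subalgebra_gen_by, auto)
  have "integrable M (pbar r (i - 1))"
    using assms(3) by (intro integrable_pbar) auto
  moreover have "pbar r (i - 1) \<in> borel_measurable F"
    unfolding F_def by (intro borel_measurable_pbar borel_measurable_gen_by_component) auto
  ultimately have "AE x in M. real_cond_exp M F (\<lambda>x. (r i x - (1 - lam i) * pbar r (i - 1) x) / lam i) x = c"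
    using assms by (intro F.real_cond_exp_debiased) (auto simp: F_def)
  then show ?thesis
    using assms(1) by (simp add: rhat_def[abs_def] F_def)
qed

theorem theoremA10:
  fixes M :: "'a measure" and r :: "nat \<Rightarrow> 'a \<Rightarrow> real"
    and lam :: "nat \<Rightarrow> real" and p :: real
  assumes "prob_space M"
    and "0 < p" and "p < 1"
    and "lam 1 = 1"
    and "\<And>n. n > 1 \<Longrightarrow> 0 < lam n \<and> lam n \<le> lam (n - 1)"
    and "\<And>n. n \<ge> 1 \<Longrightarrow> r n \<in> borel_measurable M"
    and "\<And>n x. n \<ge> 1 \<Longrightarrow> x \<in> space M \<Longrightarrow> r n x \<in> {0, 1}"
    and "measure M {x \<in> space M. r 1 x = 1} = p"
    and "\<And>n. n \<ge> 2 \<Longrightarrow>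
           AE x in M. real_cond_exp M (gen_by M r {1..n - 1}) (r n) x
                      = lam n * p + (1 - lam n) * pbar r (n - 1) x"
    and "1 \<le> j" and "j < i"
  shows "(AE x in M. real_cond_exp M (gen1 M (rhat lam r j)) (rhat lam r i) x = p)
       \<and> (AE x in M. real_cond_exp M (gen1 M (pbar r j)) (rhat lam r i) x = p)"
proof -
  interpret prob_space M by fact
  define F where "F = gen_by M r {1..i - 1}"
  have i: "i \<ge> 2" "0 < lam i" using assms(5)[of i] assms(10,11) by auto
  have F: "subalgebra M F"
    unfolding F_def using assms(6) by (intro subalgebra_gen_by) auto
  have space_F: "space F = space M"
    using F by (simp add: subalgebra_def)
  have r_F: "r k \<in> borel_measurable F" if "k \<le> i - 1" "1 \<le> k" for k
    unfolding F_def using that by (intro borel_measurable_gen_by_component) auto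
  have r_int: "integrable M (r k)" if "1 \<le> k" for k
    using assms(6,7)[OF that] by (rule integrable_zero_one_valued)
  have cond_exp_F: "AE x in M. real_cond_exp M F (rhat lam r i) x = p"
    unfolding F_def using i r_int assms(9)[OF i(1)] by (intro real_cond_exp_rhat_past) auto
  have rhat_int: "integrable M (rhat lam r i)"
    using r_int i by (intro integrable_rhat) auto
  have cond_exp_coarser: "AE x in M. real_cond_exp M G (rhat lam r i) x = p"
    if "subalgebra F G" for G
    using F that rhat_int cond_exp_F by (rule real_cond_exp_nested_subalg_const)
  have "rhat lam r j \<in> borel_measurable F"
    using assms(10,11) r_F by (intro borel_measurable_rhat) auto
  moreover have "pbar r j \<in> borel_measurable F"
    using assms(11) r_F by (intro borel_measurable_pbar) auto
  ultimately show ?thesis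
    using cond_exp_coarser subalgebra_gen1 space_F by blast
qed

end
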